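(* There exists a constant $C$ such that for every integer $t\ge0$ whose binary expansion has $M$ maximal blocks of $1$s, \[|\kappa_2(t)|\le CM,\quad |\kappa_3(t)|\le CM,\quad |\kappa_4(t)|\le CM,\quad |\kappa_5(t)|\le CM.\]
   Context: $s(n)$ is the number of $1$s in the binary expansion of $n\ge0$. For integers $j$ and $t\ge0$, $\delta(j,t)=\lim_{N\to\infty}\frac1N|\{0\le n<N: s(n+t)-s(n)=j\}|$, a probability distribution on $\mathbb Z$. $\kappa_j(t)$ denotes the $j$-th cumulant of this distribution, i.e. the real numbers with $\log\sum_{k\in\mathbb Z}\delta(k,t)e^{2\pi i k\vartheta}=\sum_{j\ge0}\frac{\kappa_j(t)}{j!}(2\pi i\vartheta)^j$ for $\vartheta$ near $0$. A maximal block of $1$s is a maximal run of consecutive binary digits equal to $1$. *)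

theory Defs
  imports "HOL-Analysis.Analysis"
begin

definition binsum :: "nat \<Rightarrow> nat" where
  "binsum n = card {i. bit n i}"

definition delta :: "int \<Rightarrow> nat \<Rightarrow> real" where
  "delta j t = lim (\<lambda>N. real (card {n. n < N \<and> int (binsum (n + t)) - int (binsum n) = j}) / real N)"

definition charfun_delta :: "nat \<Rightarrow> complex \<Rightarrow> complex" where
  "charfun_delta t \<theta> = (\<Sum>\<^sub>\<infinity>k\<in>(UNIV::int set). complex_of_real (delta k t) * exp (2 * of_real pi * \<i> * of_int k * \<theta>))"

text \<open>j-th cumulant: kappa_j(t) = (d/dtheta)^j log(charfun) at 0, divided by (2 pi i)^j,
  i.e. the Taylor coefficients in the expansion log phi = sum kappa_j/j! (2 pi i theta)^j.\<close>
definition cumulant :: "nat \<Rightarrow> nat \<Rightarrow> complex" where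
  "cumulant j t = (deriv ^^ j) (\<lambda>\<theta>. Ln (charfun_delta t \<theta>)) 0 / (2 * of_real pi * \<i>) ^ j"

text \<open>Number of maximal blocks of 1s in the binary expansion of t (counted by their top digit).\<close>
definition num_blocks :: "nat \<Rightarrow> nat" where
  "num_blocks t = card {i. bit t i \<and> \<not> bit t (Suc i)}"

end

theory Submission
  imports Defs "HOL-Complex_Analysis.Complex_Analysis"
begin

text \<open>
  Splitting \<open>n\<close> by parity gives \<open>delta j (2u) = delta j u\<close> and
  \<open>delta j (2u+1) = (delta (j-1) u + delta (j+1) (u+1)) / 2\<close>, so the characteristic
  functions \<open>phi_t\<close> of \<open>delta (-) t\<close> satisfy \<open>phi_(2u) = phi_u\<close> and
  \<open>phi_(2u+1) = (e phi_u + e^-1 phi_(u+1)) / 2\<close> with \<open>e = exp (2 pi i theta)\<close>.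
  For small complex \<open>theta\<close> the ratios \<open>R_t = phi_(t+1) / phi_t\<close> obey
  \<open>R_(2u) = (e + e^-1 R_u) / 2\<close> and \<open>R_(2u+1) = R_u / R_(2u)\<close> and stay close to 1,
  and \<open>log phi_t\<close> is the sum of \<open>log R_(2u)\<close> over the odd steps \<open>t = 2u+1\<close> of the
  binary expansion. The odd step is a contraction towards a point at which the even step
  takes the value 1, so along a maximal block of 1s these logarithms decay geometrically:
  each block contributes \<open>O(1)\<close> and \<open>|log phi_t| <= 8 M\<close> on a fixed disc around 0.
  Cauchy's estimates on that disc bound the Taylor coefficients of \<open>log phi_t\<close>,
  which are the cumulants up to powers of \<open>2 pi i\<close>.
\<close>

section \<open>Binary digit sums and blocks\<close>

lemma finite_bit_nat: "finite {i. bit (m::nat) i}"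
proof (rule finite_subset)
  show "{i. bit m i} \<subseteq> {..<m}"
  proof
    fix i assume "i \<in> {i. bit m i}"
    then have "2 ^ i \<le> m"
      by (metis bit_iff_odd div_eq_0_iff even_zero mem_Collect_eq not_less)
    then show "i \<in> {..<m}" by (simp add: less_le_trans[OF less_exp])
  qed
qed simp

lemma card_Collect_nat_Suc:
  assumes "finite {i::nat. P i}"
  shows "card {i. P i} = card {i. P (Suc i)} + (if P 0 then 1 else 0)"
proof -
  have split: "{i. P i} = Suc ` {i. P (Suc i)} \<union> (if P 0 then {0} else {})"
    by (auto simp: image_iff) (metis not0_implies_Suc)+
  have "finite {i. P (Suc i)}"
    using finite_vimageI[OF assms inj_Suc] by (simp add: vimage_def)
  then show ?thesis
    by (subst split) (auto simp: card_image)
qed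

lemma binsum_rec: "binsum n = binsum (n div 2) + (if odd n then 1 else 0)"
  unfolding binsum_def
  by (subst card_Collect_nat_Suc) (simp_all add: finite_bit_nat bit_Suc bit_0)

lemma binsum_double [simp]: "binsum (2 * m) = binsum m"
  using binsum_rec[of "2 * m"] by simp

lemma binsum_Suc_double [simp]: "binsum (Suc (2 * m)) = Suc (binsum m)"
  using binsum_rec[of "Suc (2 * m)"] by simp

lemma binsum_Suc_le: "binsum (Suc n) \<le> binsum n + 1"
proof (induction n rule: nat_bit_induct)
  case zero
  show ?case using binsum_Suc_double[of 0] by simp
next
  case (odd n)
  then show ?case using binsum_double[of "Suc n"] by simp
qed simp

lemma num_blocks_rec:
  "num_blocks n = num_blocks (n div 2) + (if odd n \<and> even (n div 2) then 1 else 0)"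
proof -
  have "finite {i. bit n i \<and> \<not> bit n (Suc i)}"
    by (rule finite_subset[OF _ finite_bit_nat[of n]]) auto
  then show ?thesis
    unfolding num_blocks_def by (subst card_Collect_nat_Suc) (simp_all add: bit_Suc bit_0)
qed

section \<open>Densities of the digit-sum differences\<close>

definition has_density :: "nat set \<Rightarrow> real \<Rightarrow> bool" where
  "has_density A d \<longleftrightarrow> (\<lambda>N. real (card {n. n < N \<and> n \<in> A}) / real N) \<longlonglongrightarrow> d"

lemma has_density_UNIV: "has_density UNIV 1"
  unfolding has_density_def
  by (rule tendsto_eventually) (auto intro: eventually_mono[OF eventually_gt_at_top[of 0]])

lemma has_density_empty: "has_density {} 0"
  by (simp add: has_density_def)

lemma card_less_interleave:
  "card {n. n < (N::nat) \<and> n \<in> A} =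
     card {m. m < (N + 1) div 2 \<and> 2 * m \<in> A} + card {m. m < N div 2 \<and> 2 * m + 1 \<in> A}"
proof (induction N)
  case 0
  then show ?case by simp
next
  case (Suc N)
  have step: "card {n. n < Suc k \<and> P n} = card {n. n < k \<and> P n} + (if P k then 1 else 0)" for k P
  proof -
    have "{n. n < Suc k \<and> P n} = (if P k then insert k else id) {n. n < k \<and> P n}"
      by (auto simp: less_Suc_eq)
    then show ?thesis by simp
  qed
  show ?case
  proof (cases "even N")
    case True
    then obtain k where "N = 2 * k" by blast
    then show ?thesis using Suc step[of k "\<lambda>m. 2 * m \<in> A"] step[of N "\<lambda>n. n \<in> A"] by simp
  next
    case False
    then obtain k where "N = 2 * k + 1" by (blast elim: oddE)
    then show ?thesis using Suc step[of k "\<lambda>m. 2 * m + 1 \<in> A"] step[of N "\<lambda>n. n \<in> A"] by simp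
  qed
qed

lemma half_ratio_tendsto:
  assumes "\<And>N. \<bar>2 * real (g N) - real N\<bar> \<le> 1"
  shows "(\<lambda>N. real (g N) / real N) \<longlonglongrightarrow> 1 / 2"
proof -
  have "(\<lambda>N. real (g N) / real N - 1 / 2) \<longlonglongrightarrow> 0"
  proof (rule Lim_null_comparison[OF _ lim_1_over_n])
    show "\<forall>\<^sub>F N in sequentially. norm (real (g N) / real N - 1 / 2) \<le> 1 / real N"
    proof (rule eventually_mono[OF eventually_gt_at_top[of 0]])
      fix N :: nat assume "0 < N"
      then have "real (g N) / real N - 1 / 2 = (2 * real (g N) - real N) / (2 * real N)"
        by (simp add: field_simps)
      then show "norm (real (g N) / real N - 1 / 2) \<le> 1 / real N"
        using assms[of N] \<open>0 < N\<close> by (simp add: field_simps)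
    qed
  qed
  then show ?thesis by (simp add: LIM_zero_iff)
qed

lemma has_density_rescale:
  assumes "has_density A d" and g: "\<And>N. \<bar>2 * real (g N) - real N\<bar> \<le> 1"
  shows "(\<lambda>N. real (card {n. n < g N \<and> n \<in> A}) / real N) \<longlonglongrightarrow> d / 2"
proof -
  have g_top: "filterlim g at_top sequentially"
    unfolding filterlim_at_top eventually_sequentially
  proof (intro allI exI[of _ "2 * Z + 1" for Z] impI)
    fix Z N :: nat assume "2 * Z + 1 \<le> N"
    then show "Z \<le> g N" using g[of N] by linarith
  qed
  have lim: "(\<lambda>N. real (card {n. n < g N \<and> n \<in> A}) / real (g N)) \<longlonglongrightarrow> d"
    using filterlim_compose[OF assms(1)[unfolded has_density_def] g_top] by (simp add: o_def)
  have "(\<lambda>N. real (card {n. n < g N \<and> n \<in> A}) / real (g N) * (real (g N) / real N))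
      \<longlonglongrightarrow> d / 2"
    using tendsto_mult[OF lim half_ratio_tendsto[OF g]] by simp
  moreover have "real (card {n. n < g N \<and> n \<in> A}) / real (g N) * (real (g N) / real N)
      = real (card {n. n < g N \<and> n \<in> A}) / real N" for N
    by (cases "g N = 0") simp_all
  ultimately show ?thesis by (simp only:)
qed

lemma has_density_interleave:
  assumes "has_density {m. 2 * m \<in> A} a" and "has_density {m. 2 * m + 1 \<in> A} b"
  shows "has_density A ((a + b) / 2)"
proof -
  have "(\<lambda>N. real (card {m. m < (N + 1) div 2 \<and> m \<in> {m. 2 * m \<in> A}}) / real N
       + real (card {m. m < N div 2 \<and> m \<in> {m. 2 * m + 1 \<in> A}}) / real N) \<longlonglongrightarrow> a / 2 + b / 2"
    by (intro tendsto_add has_density_rescale assms) linarith+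
  then show ?thesis
    unfolding has_density_def card_less_interleave[of _ A] by (simp add: add_divide_distrib)
qed

definition binsum_diff_set :: "nat \<Rightarrow> int \<Rightarrow> nat set" where
  "binsum_diff_set t j = {n. int (binsum (n + t)) - int (binsum n) = j}"

lemma binsum_diff_set_zero: "binsum_diff_set 0 j = (if j = 0 then UNIV else {})"
  by (auto simp: binsum_diff_set_def)

lemma binsum_diff_set_one:
  assumes "j \<ge> 2"
  shows "binsum_diff_set 1 j = {}"
proof -
  have "int (binsum (n + 1)) - int (binsum n) \<noteq> j" for n
    using binsum_Suc_le[of n] assms by simp
  then show ?thesis by (simp add: binsum_diff_set_def)
qed

lemma binsum_diff_set_double:
  "{m. 2 * m \<in> binsum_diff_set (2 * u) j} = binsum_diff_set u j"
  "{m. 2 * m + 1 \<in> binsum_diff_set (2 * u) j} = binsum_diff_set u j"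
proof -
  have "2 * m + 2 * u = 2 * (m + u)" "2 * m + 1 + 2 * u = Suc (2 * (m + u))" for m :: nat
    by simp_all
  then show "{m. 2 * m \<in> binsum_diff_set (2 * u) j} = binsum_diff_set u j"
    "{m. 2 * m + 1 \<in> binsum_diff_set (2 * u) j} = binsum_diff_set u j"
    unfolding binsum_diff_set_def mem_Collect_eq by (simp_all only: binsum_double binsum_Suc_double) auto
qed

lemma binsum_diff_set_Suc_double:
  "{m. 2 * m \<in> binsum_diff_set (2 * u + 1) j} = binsum_diff_set u (j - 1)"
  "{m. 2 * m + 1 \<in> binsum_diff_set (2 * u + 1) j} = binsum_diff_set (u + 1) (j + 1)"
proof -
  have "2 * m + (2 * u + 1) = Suc (2 * (m + u))" "2 * m + 1 + (2 * u + 1) = 2 * (m + u + 1)"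
    for m :: nat by simp_all
  then show "{m. 2 * m \<in> binsum_diff_set (2 * u + 1) j} = binsum_diff_set u (j - 1)"
    "{m. 2 * m + 1 \<in> binsum_diff_set (2 * u + 1) j} = binsum_diff_set (u + 1) (j + 1)"
    unfolding binsum_diff_set_def mem_Collect_eq by (simp_all only: binsum_double binsum_Suc_double) auto
qed

lemma delta_eqI: "has_density (binsum_diff_set t j) d \<Longrightarrow> delta j t = d"
  unfolding has_density_def delta_def binsum_diff_set_def by (simp add: limI)

lemma has_density_binsum_diff_set_zero: "has_density (binsum_diff_set 0 j) (if j = 0 then 1 else 0)"
  by (simp add: binsum_diff_set_zero has_density_UNIV has_density_empty)

lemma ex_has_density_binsum_diff_set_one: "\<exists>d. has_density (binsum_diff_set 1 j) d"
proof (cases "j \<ge> 2")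
  case True
  then show ?thesis using has_density_empty binsum_diff_set_one by metis
next
  case False
  then have j: "j = 1 - int (nat (1 - j))" by simp
  have "\<exists>d. has_density (binsum_diff_set 1 (1 - int m)) d" for m
  proof (induction m)
    case 0
    have "has_density (binsum_diff_set 1 1) ((1 + 0) / 2)"
      using has_density_interleave[of "binsum_diff_set 1 1" 1 0]
        binsum_diff_set_Suc_double[of 0 1] has_density_binsum_diff_set_zero[of 0]
        has_density_empty binsum_diff_set_one[of 2]
      by simp
    then show ?case by auto
  next
    case (Suc m)
    then obtain d where "has_density (binsum_diff_set 1 (1 - int m)) d" ..
    moreover have "has_density (binsum_diff_set 0 (1 - int (Suc m) - 1)) 0"
      using has_density_binsum_diff_set_zero[of "1 - int (Suc m) - 1"] by simp
    ultimately have "has_density (binsum_diff_set 1 (1 - int (Suc m))) ((0 + d) / 2)"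
      using has_density_interleave[of "binsum_diff_set 1 (1 - int (Suc m))" 0 d]
        binsum_diff_set_Suc_double[of 0 "1 - int (Suc m)"]
      by simp
    then show ?case by auto
  qed
  then show ?thesis by (subst j)
qed

lemma ex_has_density_binsum_diff_set: "\<exists>d. has_density (binsum_diff_set t j) d"
proof (induction t arbitrary: j rule: less_induct)
  case (less t)
  show ?case
  proof (cases "t \<le> 1")
    case True
    then show ?thesis
      using has_density_binsum_diff_set_zero ex_has_density_binsum_diff_set_one
      by (metis One_nat_def le_Suc_eq le_zero_eq)
  next
    case False
    show ?thesis
    proof (cases "even t")
      case True
      then obtain u where t: "t = 2 * u" and "u < t" using False by (auto elim!: evenE)
      then obtain a where "has_density (binsum_diff_set u j) a" using less.IH by blast
      then have "has_density (binsum_diff_set (2 * u) j) ((a + a) / 2)"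
        using has_density_interleave[of "binsum_diff_set (2 * u) j" a a]
        by (simp only: binsum_diff_set_double)
      then show ?thesis unfolding t ..
    next
      case odd: False
      then obtain u where t: "t = 2 * u + 1" and "u < t" "u + 1 < t" using False by (auto elim!: oddE)
      obtain a where "has_density (binsum_diff_set u (j - 1)) a"
        using less.IH \<open>u < t\<close> by blast
      moreover obtain b where "has_density (binsum_diff_set (u + 1) (j + 1)) b"
        using less.IH \<open>u + 1 < t\<close> by blast
      ultimately have "has_density (binsum_diff_set (2 * u + 1) j) ((a + b) / 2)"
        using has_density_interleave[of "binsum_diff_set (2 * u + 1) j" a b]
        by (simp only: binsum_diff_set_Suc_double)
      then show ?thesis unfolding t ..
    qed
  qed
qed

lemma has_density_delta: "has_density (binsum_diff_set t j) (delta j t)"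
proof -
  obtain d where "has_density (binsum_diff_set t j) d"
    using ex_has_density_binsum_diff_set ..
  with delta_eqI[OF this] show ?thesis by simp
qed

lemma delta_double: "delta j (2 * u) = delta j u"
proof -
  have "delta j (2 * u) = (delta j u + delta j u) / 2"
    using has_density_interleave[of "binsum_diff_set (2 * u) j", unfolded binsum_diff_set_double,
        OF has_density_delta has_density_delta]
    by (rule delta_eqI)
  then show ?thesis by simp
qed

lemma delta_Suc_double: "delta j (2 * u + 1) = (delta (j - 1) u + delta (j + 1) (u + 1)) / 2"
  using has_density_interleave[of "binsum_diff_set (2 * u + 1) j", unfolded binsum_diff_set_Suc_double,
      OF has_density_delta has_density_delta]
  by (rule delta_eqI)

lemma delta_zero: "delta j 0 = (if j = 0 then 1 else 0)"
  using has_density_binsum_diff_set_zero by (rule delta_eqI)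

lemma delta_one_eq_0: "j \<ge> 2 \<Longrightarrow> delta j 1 = 0"
  by (metis delta_eqI has_density_empty binsum_diff_set_one)

lemma delta_one: "delta (1 - int m) 1 = (1 / 2) ^ Suc m"
proof (induction m)
  case 0
  have "delta 1 1 = (delta 0 0 + delta 2 1) / 2"
    using delta_Suc_double[of 1 0] by simp
  moreover have "delta 2 1 = 0" by (rule delta_one_eq_0) simp
  ultimately show ?case by (simp add: delta_zero)
next
  case (Suc m)
  have "1 - int (Suc m) + 1 = 1 - int m" by simp
  then have "delta (1 - int (Suc m)) 1 = (delta (1 - int (Suc m) - 1) 0 + delta (1 - int m) 1) / 2"
    using delta_Suc_double[of "1 - int (Suc m)" 0] by simp
  moreover have "delta (1 - int (Suc m) - 1) 0 = 0" by (simp add: delta_zero)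
  ultimately show ?case using Suc.IH by simp
qed

section \<open>The recursion for the ratio of consecutive characteristic functions\<close>

definition step_even :: "complex \<Rightarrow> complex \<Rightarrow> complex \<Rightarrow> complex" where
  "step_even e b r = (e + b * r) / 2"

definition step_odd :: "complex \<Rightarrow> complex \<Rightarrow> complex \<Rightarrow> complex" where
  "step_odd e b r = r / step_even e b r"

definition odd_fixpoint :: "complex \<Rightarrow> complex" where
  "odd_fixpoint e = e * (2 - e)"

locale near_one =
  fixes e b :: complex
  assumes mult_eq_1: "e * b = 1"
    and e_near: "norm (e - 1) \<le> 1 / 100"
    and b_near: "norm (b - 1) \<le> 1 / 100"
begin

lemma norm_e_le: "norm e \<le> 101 / 100"
  using norm_triangle_ineq[of "e - 1" 1] e_near by simp

lemma norm_b_le: "norm b \<le> 101 / 100"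
  using norm_triangle_ineq[of "b - 1" 1] b_near by simp

lemma norm_b_minus_1_mult_le:
  assumes "norm (r - 1) \<le> 1 / 2"
  shows "norm ((b - 1) * r) \<le> 3 / 200"
proof -
  have "norm ((b - 1) * r) \<le> 1 / 100 * (3 / 2)"
    unfolding norm_mult
    by (rule mult_mono) (use b_near norm_triangle_ineq[of "r - 1" 1] assms in auto)
  then show ?thesis by simp
qed

lemma step_even_near:
  assumes r: "norm (r - 1) \<le> 1 / 2"
  shows "norm (step_even e b r - 1) \<le> 21 / 80"
proof -
  have "norm ((e - 1) + (b - 1) * r + (r - 1)) \<le> 21 / 40"
    using norm_triangle_ineq[of "(e - 1) + (b - 1) * r" "r - 1"]
      norm_triangle_ineq[of "e - 1" "(b - 1) * r"] norm_b_minus_1_mult_le[OF r] e_near r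
    by linarith
  moreover have "step_even e b r - 1 = ((e - 1) + (b - 1) * r + (r - 1)) / 2"
    by (simp add: step_even_def field_simps)
  ultimately show ?thesis by (simp only: norm_divide) simp
qed

lemma norm_step_even_ge:
  assumes "norm (r - 1) \<le> 1 / 2"
  shows "norm (step_even e b r) \<ge> 59 / 80"
  using step_even_near[OF assms] norm_triangle_ineq2[of 1 "step_even e b r"]
  by (simp add: norm_minus_commute)

lemma Re_step_even_pos: "norm (r - 1) \<le> 1 / 2 \<Longrightarrow> Re (step_even e b r) > 0"
  using step_even_near[of r] abs_Re_le_cmod[of "step_even e b r - 1"] by auto

lemma step_even_nonzero: "norm (r - 1) \<le> 1 / 2 \<Longrightarrow> step_even e b r \<noteq> 0"
  using Re_step_even_pos[of r] by auto

lemma step_odd_near: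
  assumes r: "norm (r - 1) \<le> 1 / 2"
  shows "norm (step_odd e b r - 1) \<le> 1 / 2"
proof -
  have num: "norm ((r - 1) - (e - 1) - (b - 1) * r) \<le> 1 / 2 + 1 / 100 + 3 / 200"
    using norm_triangle_ineq4[of "(r - 1) - (e - 1)" "(b - 1) * r"]
      norm_triangle_ineq4[of "r - 1" "e - 1"] norm_b_minus_1_mult_le[OF r] e_near r
    by linarith
  have "step_odd e b r - 1 = (r - step_even e b r) / step_even e b r"
    using step_even_nonzero[OF r] by (simp add: step_odd_def field_simps)
  also have "r - step_even e b r = ((r - 1) - (e - 1) - (b - 1) * r) / 2"
    by (simp add: step_even_def field_simps)
  finally have "norm (step_odd e b r - 1)
      = norm ((r - 1) - (e - 1) - (b - 1) * r) / 2 / norm (step_even e b r)"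
    by (simp add: norm_divide)
  also have "\<dots> \<le> (1 / 2 + 1 / 100 + 3 / 200) / 2 / (59 / 80)"
    by (intro frac_le divide_right_mono num norm_step_even_ge r) auto
  finally show ?thesis by simp
qed

lemma mult_odd_fixpoint: "b * odd_fixpoint e = 2 - e"
proof -
  have "b * odd_fixpoint e = (e * b) * (2 - e)"
    by (simp add: odd_fixpoint_def algebra_simps)
  then show ?thesis using mult_eq_1 by simp
qed

lemma step_odd_contracts:
  assumes r: "norm (r - 1) \<le> 1 / 2"
  shows "norm (step_odd e b r - odd_fixpoint e) \<le> 3 / 4 * norm (r - odd_fixpoint e)"
proof -
  have "odd_fixpoint e * step_even e b r = (odd_fixpoint e * e + (b * odd_fixpoint e) * r) / 2"
    by (simp add: step_even_def field_simps)
  then have num: "r - odd_fixpoint e * step_even e b r = e / 2 * (r - odd_fixpoint e)"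
    unfolding mult_odd_fixpoint by (simp add: field_simps)
  have "step_odd e b r - odd_fixpoint e
      = (r - odd_fixpoint e * step_even e b r) / step_even e b r"
    using step_even_nonzero[OF r] by (simp add: step_odd_def field_simps)
  also have "\<dots> = e / 2 * (r - odd_fixpoint e) / step_even e b r"
    unfolding num ..
  finally have "norm (step_odd e b r - odd_fixpoint e)
      = norm e / 2 * norm (r - odd_fixpoint e) / norm (step_even e b r)"
    by (simp add: norm_divide norm_mult)
  also have "\<dots> \<le> 101 / 100 / 2 * norm (r - odd_fixpoint e) / (59 / 80)"
    by (intro frac_le mult_right_mono divide_right_mono norm_e_le norm_step_even_ge r) auto
  also have "\<dots> \<le> 3 / 4 * norm (r - odd_fixpoint e)"
    by simp
  finally show ?thesis .
qed

lemma odd_fixpoint_near: "norm (odd_fixpoint e - 1) \<le> 1 / 10000"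
proof -
  have "odd_fixpoint e - 1 = - ((e - 1) * (e - 1))"
    by (simp add: odd_fixpoint_def algebra_simps)
  then have "norm (odd_fixpoint e - 1) = norm (e - 1) * norm (e - 1)"
    by (simp add: norm_mult)
  also have "\<dots> \<le> 1 / 100 * (1 / 100)"
    by (rule mult_mono) (use e_near in auto)
  finally show ?thesis by simp
qed

lemma dist_odd_fixpoint_le:
  "norm (r - 1) \<le> 1 / 2 \<Longrightarrow> norm (r - odd_fixpoint e) \<le> 3 / 5"
  using norm_triangle_ineq4[of "r - 1" "odd_fixpoint e - 1"] odd_fixpoint_near by simp

lemma norm_Ln_step_even:
  assumes r: "norm (r - 1) \<le> 1 / 2"
  shows "norm (Ln (step_even e b r)) \<le> 2 * norm (r - odd_fixpoint e)"
proof -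
  define w where "w = b / 2 * (r - odd_fixpoint e)"
  have "step_even e b r = (e + b * odd_fixpoint e + b * (r - odd_fixpoint e)) / 2"
    by (simp add: step_even_def algebra_simps)
  then have "step_even e b r = 1 + w"
    unfolding mult_odd_fixpoint w_def by (simp add: field_simps)
  have w_le: "norm w \<le> 101 / 100 / 2 * norm (r - odd_fixpoint e)"
    unfolding w_def norm_mult norm_divide by (intro mult_right_mono) (use norm_b_le in auto)
  have "norm w < 1 / 2"
    using w_le dist_odd_fixpoint_le[OF r] by simp
  then have "norm (Ln (step_even e b r)) \<le> 2 * norm w"
    unfolding \<open>step_even e b r = 1 + w\<close> by (rule norm_Ln_le)
  also have "\<dots> \<le> 2 * norm (r - odd_fixpoint e)"
    using w_le norm_ge_zero[of "r - odd_fixpoint e"] by linarith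
  finally show ?thesis .
qed

lemma initial_ratio_near: "norm (e / (2 - b) - 1) \<le> 1 / 2"
proof -
  have nb: "norm (2 - b) \<ge> 99 / 100"
    using norm_triangle_ineq2[of 1 "b - 1"] b_near by (simp add: algebra_simps)
  then have "2 - b \<noteq> 0" by auto
  then have "e / (2 - b) - 1 = ((e - 1) + (b - 1)) / (2 - b)"
    by (simp add: field_simps)
  also have "norm \<dots> \<le> (2 / 100) / (99 / 100)"
    unfolding norm_divide
    by (intro frac_le nb) (use norm_triangle_ineq[of "e - 1" "b - 1"] e_near b_near in auto)
  finally show ?thesis by simp
qed

end

definition expi :: "complex \<Rightarrow> complex" where
  "expi z = exp (2 * of_real pi * \<i> * z)"

lemma expi_add: "expi (z + w) = expi z * expi w"
  by (simp add: expi_def distrib_left exp_add)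

lemma expi_zero [simp]: "expi 0 = 1"
  by (simp add: expi_def)

lemma expi_mult_expi_minus: "expi z * expi (- z) = 1"
  by (simp add: expi_def exp_minus)

lemma expi_near_one:
  assumes "norm z \<le> 1 / 2000"
  shows "norm (expi z - 1) \<le> 1 / 100"
proof -
  have "norm (2 * of_real pi * \<i> * z) = 2 * pi * norm z"
    by (simp add: norm_mult)
  also have "\<dots> \<le> 2 * 4 * (1 / 2000)"
    using pi_less_4 assms by (intro mult_mono) auto
  finally show ?thesis
    using norm_exp_bounds(2)[of "2 * of_real pi * \<i> * z"] by (simp add: expi_def)
qed

lemma near_one_expi: "norm \<theta> \<le> 1 / 2000 \<Longrightarrow> near_one (expi \<theta>) (expi (- \<theta>))"
  using expi_near_one[of \<theta>] expi_near_one[of "- \<theta>"]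
  by unfold_locales (simp_all add: expi_mult_expi_minus)

text \<open>\<open>ratio t\<close> and \<open>log_charfun t\<close> are \<open>phi_(t+1) / phi_t\<close> and \<open>log phi_t\<close>;
  this is established by \<open>has_sum_charfun_term\<close> below.\<close>

function ratio :: "nat \<Rightarrow> complex \<Rightarrow> complex" where
  "ratio t \<theta> =
    (if t = 0 then expi \<theta> / (2 - expi (- \<theta>))
     else if even t then step_even (expi \<theta>) (expi (- \<theta>)) (ratio (t div 2) \<theta>)
     else step_odd (expi \<theta>) (expi (- \<theta>)) (ratio (t div 2) \<theta>))"
  by auto
termination by (relation "Wellfounded.measure fst") auto

function log_charfun :: "nat \<Rightarrow> complex \<Rightarrow> complex" where
  "log_charfun t \<theta> =
    (if t = 0 then 0
     else log_charfun (t div 2) \<theta>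
       + (if odd t then Ln (step_even (expi \<theta>) (expi (- \<theta>)) (ratio (t div 2) \<theta>)) else 0))"
  by auto
termination by (relation "Wellfounded.measure fst") auto

declare ratio.simps [simp del] log_charfun.simps [simp del]

lemma ratio_zero: "ratio 0 \<theta> = expi \<theta> / (2 - expi (- \<theta>))"
  by (simp add: ratio.simps)

lemma ratio_double:
  "u > 0 \<Longrightarrow> ratio (2 * u) \<theta> = step_even (expi \<theta>) (expi (- \<theta>)) (ratio u \<theta>)"
  by (simp add: ratio.simps[of "2 * u"])

lemma ratio_Suc_double:
  "ratio (Suc (2 * u)) \<theta> = step_odd (expi \<theta>) (expi (- \<theta>)) (ratio u \<theta>)"
  by (simp add: ratio.simps[of "Suc (2 * u)"])

lemma log_charfun_zero: "log_charfun 0 \<theta> = 0"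
  by (simp add: log_charfun.simps)

lemma log_charfun_double: "log_charfun (2 * u) \<theta> = log_charfun u \<theta>"
  by (cases "u = 0") (simp_all add: log_charfun.simps[of "2 * u"] log_charfun_zero)

lemma log_charfun_Suc_double:
  "log_charfun (Suc (2 * u)) \<theta>
    = log_charfun u \<theta> + Ln (step_even (expi \<theta>) (expi (- \<theta>)) (ratio u \<theta>))"
  by (simp add: log_charfun.simps[of "Suc (2 * u)"])

lemma ratio_near_one:
  assumes "norm \<theta> \<le> 1 / 2000"
  shows "norm (ratio t \<theta> - 1) \<le> 1 / 2"
proof -
  interpret near_one "expi \<theta>" "expi (- \<theta>)"
    using near_one_expi[OF assms] .
  show ?thesis
  proof (induction t rule: nat_bit_induct)
    case zero
    show ?case using initial_ratio_near by (simp add: ratio_zero)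
  next
    case (even u)
    then show ?case using step_even_near[OF even.IH] by (simp add: ratio_double)
  next
    case (odd u)
    show ?case using step_odd_near[OF odd.IH] by (simp add: ratio_Suc_double)
  qed
qed

text \<open>The potential term pays for the logarithm added at an odd step and shrinks there by
  the factor 3/4; it is recharged, by at most \<open>8 * 3/5\<close>, only where a new block of 1s starts.\<close>
lemma log_charfun_potential:
  assumes "norm \<theta> \<le> 1 / 2000"
  shows "norm (log_charfun t \<theta>)
    + of_bool (odd t) * (8 * norm (ratio t \<theta> - odd_fixpoint (expi \<theta>)))
    \<le> 8 * real (num_blocks t)"
proof (induction t rule: nat_bit_induct)
  case zero
  then show ?case by (simp add: log_charfun_zero)
next
  case (even u)
  have "0 \<le> of_bool (odd u) * (8 * norm (ratio u \<theta> - odd_fixpoint (expi \<theta>)))"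
    by simp
  then have "norm (log_charfun u \<theta>) \<le> 8 * real (num_blocks u)"
    using even.IH by linarith
  then show ?case
    using num_blocks_rec[of "2 * u"] by (simp add: log_charfun_double)
next
  case (odd u)
  interpret near_one "expi \<theta>" "expi (- \<theta>)"
    using near_one_expi[OF assms] .
  define d where "d = norm (ratio u \<theta> - odd_fixpoint (expi \<theta>))"
  have near: "norm (ratio u \<theta> - 1) \<le> 1 / 2"
    using ratio_near_one[OF assms] .
  have "norm (log_charfun (Suc (2 * u)) \<theta>) \<le> norm (log_charfun u \<theta>) + 2 * d"
    unfolding log_charfun_Suc_double d_def
    using norm_triangle_ineq add_left_mono[OF norm_Ln_step_even[OF near]] by (rule order_trans)
  moreover have "norm (ratio (Suc (2 * u)) \<theta> - odd_fixpoint (expi \<theta>)) \<le> 3 / 4 * d"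
    using step_odd_contracts[OF near] by (simp add: ratio_Suc_double d_def)
  moreover have "d \<le> 3 / 5"
    using dist_odd_fixpoint_le[OF near] by (simp add: d_def)
  moreover have "num_blocks (Suc (2 * u)) = num_blocks u + (if even u then 1 else 0)"
    using num_blocks_rec[of "Suc (2 * u)"] by simp
  ultimately show ?case
    using odd.IH by (cases "odd u") (auto simp: d_def)
qed

lemma norm_log_charfun_le:
  "norm \<theta> \<le> 1 / 2000 \<Longrightarrow> norm (log_charfun t \<theta>) \<le> 8 * real (num_blocks t)"
proof -
  assume "norm \<theta> \<le> 1 / 2000"
  moreover have "0 \<le> of_bool (odd t) * (8 * norm (ratio t \<theta> - odd_fixpoint (expi \<theta>)))"
    by simp
  ultimately show ?thesis using log_charfun_potential[of \<theta> t] by linarith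
qed

section \<open>The characteristic function as a product\<close>

definition charfun_term :: "nat \<Rightarrow> complex \<Rightarrow> int \<Rightarrow> complex" where
  "charfun_term t \<theta> k = of_real (delta k t) * expi (of_int k * \<theta>)"

lemma charfun_delta_eq_infsum: "charfun_delta t \<theta> = infsum (charfun_term t \<theta>) UNIV"
  unfolding charfun_delta_def charfun_term_def expi_def by (simp add: mult_ac)

lemma has_sum_int_shift:
  fixes f :: "int \<Rightarrow> 'a :: {comm_monoid_add, topological_space}"
  assumes "(f has_sum a) UNIV"
  shows "((\<lambda>k. f (k + c)) has_sum a) UNIV"
proof -
  have "bij_betw (\<lambda>k. k + c) UNIV UNIV"
    by (rule bij_betwI[where g = "\<lambda>k. k - c"]) auto
  then show ?thesis using has_sum_reindex_bij_betw assms by blast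
qed

lemma charfun_term_double: "charfun_term (2 * u) \<theta> = charfun_term u \<theta>"
  by (simp add: charfun_term_def delta_double fun_eq_iff)

lemma charfun_term_Suc_double:
  "charfun_term (Suc (2 * u)) \<theta> k
    = (expi \<theta> * charfun_term u \<theta> (k - 1) + expi (- \<theta>) * charfun_term (Suc u) \<theta> (k + 1)) / 2"
proof -
  have "expi \<theta> * expi (of_int (k - 1) * \<theta>) = expi (of_int k * \<theta>)"
    "expi (- \<theta>) * expi (of_int (k + 1) * \<theta>) = expi (of_int k * \<theta>)"
    by (simp_all add: expi_add[symmetric] algebra_simps)
  then have shift: "expi \<theta> * charfun_term u \<theta> (k - 1) = of_real (delta (k - 1) u) * expi (of_int k * \<theta>)"
    "expi (- \<theta>) * charfun_term (Suc u) \<theta> (k + 1)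
      = of_real (delta (k + 1) (Suc u)) * expi (of_int k * \<theta>)"
    unfolding charfun_term_def by (metis mult.left_commute)+
  have d: "delta k (Suc (2 * u)) = (delta (k - 1) u + delta (k + 1) (Suc u)) / 2"
    using delta_Suc_double[of k u] by simp
  have "charfun_term (Suc (2 * u)) \<theta> k
      = of_real ((delta (k - 1) u + delta (k + 1) (Suc u)) / 2) * expi (of_int k * \<theta>)"
    unfolding charfun_term_def d ..
  also have "\<dots> = (of_real (delta (k - 1) u) * expi (of_int k * \<theta>)
      + of_real (delta (k + 1) (Suc u)) * expi (of_int k * \<theta>)) / 2"
    by (simp add: field_simps)
  finally show ?thesis unfolding shift .
qed

lemma has_sum_charfun_term_Suc_double:
  assumes "(charfun_term u \<theta> has_sum a) UNIV" and "(charfun_term (Suc u) \<theta> has_sum a * r) UNIV"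
  shows "(charfun_term (Suc (2 * u)) \<theta> has_sum a * step_even (expi \<theta>) (expi (- \<theta>)) r) UNIV"
proof -
  have "((\<lambda>k. (expi \<theta> * charfun_term u \<theta> (k - 1) + expi (- \<theta>) * charfun_term (Suc u) \<theta> (k + 1)) / 2)
      has_sum (expi \<theta> * a + expi (- \<theta>) * (a * r)) / 2) UNIV"
    using has_sum_int_shift[OF assms(1), of "- 1"] has_sum_int_shift[OF assms(2), of 1]
    by (intro has_sum_divide_const has_sum_add has_sum_cmult_right) simp_all
  moreover have "(expi \<theta> * a + expi (- \<theta>) * (a * r)) / 2 = a * step_even (expi \<theta>) (expi (- \<theta>)) r"
    by (simp add: step_even_def field_simps)
  ultimately show ?thesis by (simp add: charfun_term_Suc_double[abs_def])
qed

lemma has_sum_charfun_term_zero: "(charfun_term 0 \<theta> has_sum 1) UNIV"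
  by (rule has_sum_finite_neutralI[where B = "{0}"]) (auto simp: charfun_term_def delta_zero)

lemma has_sum_charfun_term_one:
  assumes "norm (expi (- \<theta>)) < 2"
  shows "(charfun_term 1 \<theta> has_sum expi \<theta> / (2 - expi (- \<theta>))) UNIV"
proof -
  define q where "q = expi (- \<theta>) / 2"
  have q: "norm q < 1" using assms by (simp add: q_def norm_divide)
  have term_eq: "charfun_term 1 \<theta> (1 - int m) = expi \<theta> / 2 * q ^ m" for m
  proof -
    have "expi (of_int (1 - int m) * \<theta>) = expi \<theta> * expi (- \<theta>) ^ m"
      by (simp add: expi_def algebra_simps flip: exp_add exp_of_nat_mult)
    then show ?thesis using delta_one[of m] by (simp add: charfun_term_def q_def power_divide)
  qed
  have "(\<lambda>m. expi \<theta> / 2 * q ^ m) sums (expi \<theta> / 2 * (1 / (1 - q)))"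
    by (intro sums_mult geometric_sums q)
  moreover have "summable (\<lambda>m. norm (expi \<theta> / 2 * q ^ m))"
    unfolding norm_mult norm_power by (intro summable_mult summable_geometric) (use q in simp)
  ultimately have "((\<lambda>m. charfun_term 1 \<theta> (1 - int m)) has_sum expi \<theta> / (2 - expi (- \<theta>))) UNIV"
    using norm_summable_imp_has_sum assms unfolding term_eq
    by (fastforce simp: q_def field_simps)
  moreover have "bij_betw (\<lambda>m::nat. 1 - int m) UNIV {k. k \<le> 1}"
    by (rule bij_betwI[where g = "\<lambda>k. nat (1 - k)"]) auto
  ultimately have "(charfun_term 1 \<theta> has_sum expi \<theta> / (2 - expi (- \<theta>))) {k. k \<le> 1}"
    using has_sum_reindex_bij_betw by blast
  moreover have "charfun_term 1 \<theta> k = 0" if "\<not> k \<le> 1" for k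
    using delta_one_eq_0[of k] that by (simp add: charfun_term_def)
  ultimately show ?thesis
    by (rule has_sum_cong_neutral[THEN iffD1, rotated -1]) auto
qed

lemma has_sum_charfun_term:
  assumes "norm \<theta> \<le> 1 / 2000"
  shows "(charfun_term t \<theta> has_sum exp (log_charfun t \<theta>)) UNIV
    \<and> (charfun_term (Suc t) \<theta> has_sum exp (log_charfun t \<theta>) * ratio t \<theta>) UNIV"
proof -
  interpret near_one "expi \<theta>" "expi (- \<theta>)"
    using near_one_expi[OF assms] .
  show ?thesis
  proof (induction t rule: nat_bit_induct)
    case zero
    have "norm (expi (- \<theta>)) < 2" using norm_b_le by simp
    then show ?case
      using has_sum_charfun_term_zero has_sum_charfun_term_one
      by (simp add: log_charfun_zero ratio_zero)
  next
    case (even u)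
    then show ?case
      using has_sum_charfun_term_Suc_double[of u \<theta>]
      unfolding charfun_term_double log_charfun_double ratio_double[OF even.hyps] by simp
  next
    case (odd u)
    let ?s = "step_even (expi \<theta>) (expi (- \<theta>)) (ratio u \<theta>)"
    have "?s \<noteq> 0"
      using step_even_nonzero ratio_near_one[OF assms] by blast
    then have "exp (log_charfun (Suc (2 * u)) \<theta>) = exp (log_charfun u \<theta>) * ?s"
      and "exp (log_charfun u \<theta>) * ?s * step_odd (expi \<theta>) (expi (- \<theta>)) (ratio u \<theta>)
        = exp (log_charfun u \<theta>) * ratio u \<theta>"
      by (simp_all add: log_charfun_Suc_double exp_add step_odd_def)
    moreover have "charfun_term (Suc (Suc (2 * u))) \<theta> = charfun_term (Suc u) \<theta>"
      using charfun_term_double[of "Suc u"] by simp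
    ultimately show ?case
      using odd.IH has_sum_charfun_term_Suc_double[of u \<theta>]
      by (simp add: ratio_Suc_double mult.assoc)
  qed
qed

lemma charfun_delta_eq_exp:
  "norm \<theta> \<le> 1 / 2000 \<Longrightarrow> charfun_delta t \<theta> = exp (log_charfun t \<theta>)"
  using has_sum_charfun_term by (simp add: charfun_delta_eq_infsum infsumI)

section \<open>Holomorphy and Cauchy estimates\<close>

lemma holomorphic_on_expi [holomorphic_intros]:
  "f holomorphic_on S \<Longrightarrow> (\<lambda>z. expi (f z)) holomorphic_on S"
  unfolding expi_def by (intro holomorphic_intros)

lemma holomorphic_on_step_even [holomorphic_intros]:
  "e holomorphic_on S \<Longrightarrow> b holomorphic_on S \<Longrightarrow> r holomorphic_on S
    \<Longrightarrow> (\<lambda>z. step_even (e z) (b z) (r z)) holomorphic_on S"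
  unfolding step_even_def by (intro holomorphic_intros) auto

lemma ratio_holomorphic: "ratio t holomorphic_on ball 0 (1 / 2000)"
proof (induction t rule: nat_bit_induct)
  case zero
  have "2 - expi (- \<theta>) \<noteq> 0" if "\<theta> \<in> ball 0 (1 / 2000)" for \<theta>
  proof -
    interpret near_one "expi \<theta>" "expi (- \<theta>)"
      using near_one_expi that by simp
    show ?thesis using norm_b_le by auto
  qed
  then show ?case
    unfolding ratio_zero[abs_def] by (intro holomorphic_intros) auto
next
  case (even u)
  then show ?case
    unfolding ratio_double[OF even.hyps, abs_def] by (intro holomorphic_intros)
next
  case (odd u)
  have "step_even (expi \<theta>) (expi (- \<theta>)) (ratio u \<theta>) \<noteq> 0" if "\<theta> \<in> ball 0 (1 / 2000)" for \<theta>
  proof -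
    interpret near_one "expi \<theta>" "expi (- \<theta>)"
      using near_one_expi that by simp
    show ?thesis using step_even_nonzero ratio_near_one that by simp
  qed
  then show ?case
    using odd.IH unfolding ratio_Suc_double[abs_def] step_odd_def
    by (intro holomorphic_intros) auto
qed

lemma log_charfun_holomorphic: "log_charfun t holomorphic_on ball 0 (1 / 2000)"
proof (induction t rule: nat_bit_induct)
  case zero
  then show ?case by (simp add: log_charfun_zero[abs_def])
next
  case (even u)
  then show ?case by (simp add: log_charfun_double[abs_def])
next
  case (odd u)
  have "step_even (expi \<theta>) (expi (- \<theta>)) (ratio u \<theta>) \<notin> \<real>\<^sub>\<le>\<^sub>0"
    if "\<theta> \<in> ball 0 (1 / 2000)" for \<theta>
  proof -
    interpret near_one "expi \<theta>" "expi (- \<theta>)"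
      using near_one_expi that by simp
    have "norm \<theta> \<le> 1 / 2000" using that by simp
    then have "Re (step_even (expi \<theta>) (expi (- \<theta>)) (ratio u \<theta>)) > 0"
      by (intro Re_step_even_pos ratio_near_one)
    then show ?thesis by (auto simp: complex_nonpos_Reals_iff)
  qed
  then show ?case
    using odd.IH ratio_holomorphic[of u] unfolding log_charfun_Suc_double[abs_def]
    by (intro holomorphic_intros) auto
qed

lemma ratio_at_zero: "ratio t 0 = 1"
  by (induction t rule: nat_bit_induct)
    (simp_all add: ratio_zero ratio_double ratio_Suc_double step_even_def step_odd_def)

lemma log_charfun_at_zero: "log_charfun t 0 = 0"
  by (induction t rule: nat_bit_induct)
    (simp_all add: log_charfun_zero log_charfun_double log_charfun_Suc_double ratio_at_zero
      step_even_def)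

lemma eventually_Ln_charfun_delta:
  "eventually (\<lambda>\<theta>. Ln (charfun_delta t \<theta>) = log_charfun t \<theta>) (nhds 0)"
proof -
  let ?U = "ball 0 (1 / 2000) \<inter> log_charfun t -` ball 0 1"
  have "continuous_on (ball 0 (1 / 2000)) (log_charfun t)"
    using log_charfun_holomorphic holomorphic_on_imp_continuous_on by blast
  then have "open ?U"
    by (intro continuous_open_preimage) auto
  moreover have "0 \<in> ?U" by (simp add: log_charfun_at_zero)
  moreover have "Ln (charfun_delta t \<theta>) = log_charfun t \<theta>" if "\<theta> \<in> ?U" for \<theta>
  proof -
    have "\<bar>Im (log_charfun t \<theta>)\<bar> < 1"
      using that abs_Im_le_cmod[of "log_charfun t \<theta>"] by auto
    then have "- pi < Im (log_charfun t \<theta>)" "Im (log_charfun t \<theta>) \<le> pi"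
      using pi_gt3 by linarith+
    then show ?thesis using that by (simp add: charfun_delta_eq_exp)
  qed
  ultimately show ?thesis unfolding eventually_nhds by blast
qed

lemma norm_higher_deriv_log_charfun_le:
  "norm ((deriv ^^ j) (log_charfun t) 0) \<le> fact j * 4000 ^ j * (8 * real (num_blocks t))"
proof -
  have "norm ((deriv ^^ j) (log_charfun t) 0) \<le> fact j * (8 * real (num_blocks t)) / (1 / 4000) ^ j"
  proof (rule Cauchy_inequality)
    have "log_charfun t holomorphic_on cball 0 (1 / 4000)"
      by (rule holomorphic_on_subset[OF log_charfun_holomorphic]) auto
    then show "log_charfun t holomorphic_on ball 0 (1 / 4000)"
      and "continuous_on (cball 0 (1 / 4000)) (log_charfun t)"
      by (auto simp: holomorphic_on_imp_continuous_on)
    show "norm (log_charfun t w) \<le> 8 * real (num_blocks t)" if "norm (0 - w) = 1 / 4000" for w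
      using that by (intro norm_log_charfun_le) simp
  qed simp
  then show ?thesis by (simp add: power_one_over mult_ac)
qed

lemma norm_cumulant_le:
  "cmod (cumulant j t) \<le> fact j * 4000 ^ j * (8 * real (num_blocks t))"
proof -
  have "cumulant j t = (deriv ^^ j) (log_charfun t) 0 / (2 * of_real pi * \<i>) ^ j"
    unfolding cumulant_def by (simp add: higher_deriv_cong_ev[OF eventually_Ln_charfun_delta])
  moreover have "norm ((2 * of_real pi * \<i>) ^ j :: complex) = (2 * pi) ^ j"
    by (simp add: norm_mult norm_power)
  moreover have "(1::real) \<le> (2 * pi) ^ j"
    using pi_gt3 by (intro one_le_power) simp
  ultimately have "cmod (cumulant j t) \<le> norm ((deriv ^^ j) (log_charfun t) 0)"
    by (simp add: norm_divide divide_le_eq_1 divide_le_eq mult_le_cancel_left1)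
  then show ?thesis using norm_higher_deriv_log_charfun_le by (rule order_trans)
qed

theorem corollary2p3:
  shows "\<exists>C::real. \<forall>t::nat. \<forall>j\<in>{2,3,4,5::nat}. cmod (cumulant j t) \<le> C * real (num_blocks t)"
proof (intro exI allI ballI)
  fix t j assume "j \<in> {2, 3, 4, 5::nat}"
  then have "fact j * 4000 ^ j \<le> (fact 5 * 4000 ^ 5 :: real)"
    by (intro mult_mono fact_mono power_increasing) auto
  then have "fact j * 4000 ^ j * (8 * real (num_blocks t))
      \<le> fact 5 * 4000 ^ 5 * (8 * real (num_blocks t))"
    by (intro mult_right_mono) auto
  then show "cmod (cumulant j t) \<le> (fact 5 * 4000 ^ 5 * 8) * real (num_blocks t)"
    using order_trans[OF norm_cumulant_le] by (simp only: mult.assoc)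
qed

end
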